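(* Every open subset of a UE-space $Y$ is the union of a $\sigma$-boundedly point-finite family of cozero-sets of $Y$.
   Context: "Space" means topological $T_0$-space. A zero-set (cozero-set) of $Y$ is $f^{-1}(0)$ (resp. its complement) for continuous $f:Y\to[0,1]$. A U-representation of $V\subseteq Y$ is a sequence $(U_n(V))_{n\in\mathbb{N}}$ with $V=\bigcup_n U_n(V)$, $U_n(V)\subseteq U_{n+1}(V)$, $U_{2n-1}(V)$ a zero-set, $U_{2n}(V)$ a cozero-set. A family $\alpha$ is an almost subbase of $Y$ if U-representations of its members can be chosen so that $\alpha\cup\{Y\setminus U_{2n-1}(V):V\in\alpha,n\in\mathbb{N}\}$ is a subbase of $Y$. A family is boundedly point-finite if there is an integer $n$ such that any $n+2$ of its members have empty intersection; $\sigma$-boundedly point-finite means a countable union of boundedly point-finite families. A UE-space is a space with a $\sigma$-boundedly point-finite almost subbase. *)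

theory Defs
  imports "HOL-Analysis.Analysis"
begin

definition zero_set :: "'a topology \<Rightarrow> 'a set \<Rightarrow> bool" where
  "zero_set X Z \<longleftrightarrow> (\<exists>f. continuous_map X (top_of_set {0..1::real}) f \<and>
      Z = {x \<in> topspace X. f x = 0})"

definition cozero_set :: "'a topology \<Rightarrow> 'a set \<Rightarrow> bool" where
  "cozero_set X C \<longleftrightarrow> (\<exists>f. continuous_map X (top_of_set {0..1::real}) f \<and>
      C = topspace X - {x \<in> topspace X. f x = 0})"

text \<open>U-representation; indices shifted to start at 0:
  U (2n) corresponds to the paper's U_{2n+1} (zero-set), U (2n+1) to U_{2n+2} (cozero-set).\<close>
definition U_representation :: "'a topology \<Rightarrow> 'a set \<Rightarrow> (nat \<Rightarrow> 'a set) \<Rightarrow> bool" where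
  "U_representation X V U \<longleftrightarrow>
     V = (\<Union>n. U n) \<and> (\<forall>n. U n \<subseteq> U (Suc n)) \<and>
     (\<forall>n. zero_set X (U (2*n))) \<and> (\<forall>n. cozero_set X (U (2*n+1)))"

definition subbase :: "'a topology \<Rightarrow> 'a set set \<Rightarrow> bool" where
  "subbase X S \<longleftrightarrow> (\<forall>s\<in>S. openin X s) \<and>
     (\<forall>W. openin X W \<longrightarrow> (\<forall>x\<in>W. \<exists>F. finite F \<and> F \<subseteq> S \<and>
          x \<in> topspace X \<inter> \<Inter>F \<and> topspace X \<inter> \<Inter>F \<subseteq> W))"

definition almost_subbase :: "'a topology \<Rightarrow> 'a set set \<Rightarrow> bool" where
  "almost_subbase X \<A> \<longleftrightarrow> (\<exists>U. (\<forall>V\<in>\<A>. U_representation X V (U V)) \<and>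
     subbase X (\<A> \<union> {topspace X - U V (2*n) | V n. V \<in> \<A>}))"

definition boundedly_point_finite :: "'a set set \<Rightarrow> bool" where
  "boundedly_point_finite \<A> \<longleftrightarrow>
     (\<exists>n::nat. \<forall>\<F>. \<F> \<subseteq> \<A> \<and> finite \<F> \<and> card \<F> = n + 2 \<longrightarrow> \<Inter>\<F> = {})"

definition sigma_boundedly_point_finite :: "'a set set \<Rightarrow> bool" where
  "sigma_boundedly_point_finite \<A> \<longleftrightarrow>
     (\<exists>\<B> :: nat \<Rightarrow> 'a set set. \<A> = (\<Union>k. \<B> k) \<and> (\<forall>k. boundedly_point_finite (\<B> k)))"

definition UE_space :: "'a topology \<Rightarrow> bool" where
  "UE_space X \<longleftrightarrow> t0_space X \<and>
     (\<exists>\<A>. almost_subbase X \<A> \<and> sigma_boundedly_point_finite \<A>)"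

end

theory Submission
  imports Defs
begin

text \<open>
  Using the U-representations, a subbasic neighbourhood of a point of W inside W shrinks to a set
  \<open>\<Inter>p - \<Union>t\<close>, where p is a finite family of cozero members and t a finite family of zero
  members of U-representations of sets of the almost subbase. Fix a level L of the
  \<sigma>-decomposition of the almost subbase and such a p at level L. The union of all sets
  \<open>\<Inter>p - \<Union>t\<close> inside W with t at level L is \<open>\<Inter>p\<close> minus an intersection of finite unions of
  zero sets; since every point meets only boundedly many zero sets of level L, that intersection is
  itself a zero set, so the union is a cozero set. A point lies in at most \<open>2\<^sup>N\<close> of these cozero
  sets, N the multiplicity bound of level L, so each level yields a boundedly point-finite family.
\<close>

lemma continuous_map_unit_interval_iff:
  "continuous_map X (top_of_set {0..1::real}) f \<longleftrightarrow>
   continuous_map X euclideanreal f \<and> (\<forall>x\<in>topspace X. f x \<in> {0..1})"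
  by (auto simp: continuous_map_in_subtopology)

lemma zero_set_empty: "zero_set X {}"
  unfolding zero_set_def
  by (rule exI[of _ "\<lambda>x. 1"]) (simp add: continuous_map_unit_interval_iff)

lemma zero_set_topspace: "zero_set X (topspace X)"
  unfolding zero_set_def
  by (rule exI[of _ "\<lambda>x. 0"]) (simp add: continuous_map_unit_interval_iff)

lemma zero_set_Un:
  assumes "zero_set X A" "zero_set X B"
  shows "zero_set X (A \<union> B)"
proof -
  obtain f g where
    f: "continuous_map X euclideanreal f" "\<forall>x\<in>topspace X. f x \<in> {0..1}"
      "A = {x \<in> topspace X. f x = 0}" and
    g: "continuous_map X euclideanreal g" "\<forall>x\<in>topspace X. g x \<in> {0..1}"
      "B = {x \<in> topspace X. g x = 0}"
    using assms unfolding zero_set_def continuous_map_unit_interval_iff by blast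
  show ?thesis
    unfolding zero_set_def continuous_map_unit_interval_iff
  proof (intro exI conjI)
    show "continuous_map X euclideanreal (\<lambda>x. f x * g x)"
      using f g by (intro continuous_map_real_mult)
    show "\<forall>x\<in>topspace X. f x * g x \<in> {0..1}"
      using f(2) g(2) by (auto intro: mult_le_one)
    show "A \<union> B = {x \<in> topspace X. f x * g x = 0}"
      using f(3) g(3) by auto
  qed
qed

lemma zero_set_Int:
  assumes "zero_set X A" "zero_set X B"
  shows "zero_set X (A \<inter> B)"
proof -
  obtain f g where
    f: "continuous_map X euclideanreal f" "\<forall>x\<in>topspace X. f x \<in> {0..1}"
      "A = {x \<in> topspace X. f x = 0}" and
    g: "continuous_map X euclideanreal g" "\<forall>x\<in>topspace X. g x \<in> {0..1}"
      "B = {x \<in> topspace X. g x = 0}"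
    using assms unfolding zero_set_def continuous_map_unit_interval_iff by blast
  show ?thesis
    unfolding zero_set_def continuous_map_unit_interval_iff
  proof (intro exI conjI)
    show "continuous_map X euclideanreal (\<lambda>x. (f x + g x) / 2)"
      using f g by (intro continuous_intros) auto
    show "\<forall>x\<in>topspace X. (f x + g x) / 2 \<in> {0..1}"
      using f(2) g(2) by fastforce
    show "A \<inter> B = {x \<in> topspace X. (f x + g x) / 2 = 0}"
      using f g by force
  qed
qed

lemma zero_set_UN_finite:
  "finite I \<Longrightarrow> (\<And>i. i \<in> I \<Longrightarrow> zero_set X (A i)) \<Longrightarrow> zero_set X (\<Union>i\<in>I. A i)"
  by (induction I rule: finite_induct) (auto simp: zero_set_empty zero_set_Un)

lemma cozero_set_iff_complement_zero_set:
  "cozero_set X C \<longleftrightarrow> (\<exists>Z. zero_set X Z \<and> C = topspace X - Z)"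
  unfolding zero_set_def cozero_set_def by auto

lemma cozero_set_topspace: "cozero_set X (topspace X)"
  using zero_set_empty cozero_set_iff_complement_zero_set by fastforce

lemma cozero_set_Int:
  assumes "cozero_set X A" "cozero_set X B"
  shows "cozero_set X (A \<inter> B)"
proof -
  obtain Z Z' where "zero_set X Z" "A = topspace X - Z" "zero_set X Z'" "B = topspace X - Z'"
    using assms unfolding cozero_set_iff_complement_zero_set by blast
  then have "zero_set X (Z \<union> Z')" "A \<inter> B = topspace X - (Z \<union> Z')"
    by (auto intro: zero_set_Un)
  then show ?thesis
    unfolding cozero_set_iff_complement_zero_set by blast
qed

lemma cozero_set_INT_finite:
  "finite I \<Longrightarrow> (\<And>i. i \<in> I \<Longrightarrow> cozero_set X (A i)) \<Longrightarrow>
    cozero_set X (topspace X \<inter> (\<Inter>i\<in>I. A i))"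
proof (induction I rule: finite_induct)
  case empty
  then show ?case by (simp add: cozero_set_topspace)
next
  case (insert i I)
  have "topspace X \<inter> (\<Inter>j\<in>insert i I. A j) = A i \<inter> (topspace X \<inter> (\<Inter>j\<in>I. A j))"
    by auto
  then show ?case
    using insert by (simp add: cozero_set_Int)
qed

definition point_multiplicity_le :: "'i set \<Rightarrow> ('i \<Rightarrow> 'a set) \<Rightarrow> nat \<Rightarrow> bool" where
  "point_multiplicity_le E S N \<longleftrightarrow> (\<forall>y. finite {e\<in>E. y \<in> S e} \<and> card {e\<in>E. y \<in> S e} \<le> N)"

lemma point_multiplicity_le_mono:
  assumes "point_multiplicity_le E S N" "E' \<subseteq> E" "\<And>e. e \<in> E' \<Longrightarrow> S' e \<subseteq> S e"
  shows "point_multiplicity_le E' S' N"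
  unfolding point_multiplicity_le_def
proof
  fix y
  have "{e\<in>E'. y \<in> S' e} \<subseteq> {e\<in>E. y \<in> S e}"
    using assms(2,3) by auto
  then show "finite {e\<in>E'. y \<in> S' e} \<and> card {e\<in>E'. y \<in> S' e} \<le> N"
    using assms(1) unfolding point_multiplicity_le_def by (meson card_mono finite_subset le_trans)
qed

lemma point_multiplicity_le_UN:
  assumes "finite I" "\<And>k. k \<in> I \<Longrightarrow> point_multiplicity_le (E k) S (N k)"
  shows "point_multiplicity_le (\<Union>k\<in>I. E k) S (\<Sum>k\<in>I. N k)"
  unfolding point_multiplicity_le_def
proof
  fix y
  have eq: "{e\<in>(\<Union>k\<in>I. E k). y \<in> S e} = (\<Union>k\<in>I. {e\<in>E k. y \<in> S e})"
    by blast
  have "card (\<Union>k\<in>I. {e\<in>E k. y \<in> S e}) \<le> (\<Sum>k\<in>I. card {e\<in>E k. y \<in> S e})"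
    by (rule card_UN_le) (rule assms(1))
  also have "\<dots> \<le> (\<Sum>k\<in>I. N k)"
    using assms(2) unfolding point_multiplicity_le_def by (intro sum_mono) blast
  finally show "finite {e\<in>(\<Union>k\<in>I. E k). y \<in> S e} \<and> card {e\<in>(\<Union>k\<in>I. E k). y \<in> S e} \<le> (\<Sum>k\<in>I. N k)"
    unfolding eq using assms unfolding point_multiplicity_le_def by auto
qed

lemma point_multiplicity_le_Times:
  assumes "point_multiplicity_le E S N" "finite K"
  shows "point_multiplicity_le (E \<times> K) (\<lambda>e. S (fst e)) (N * card K)"
  unfolding point_multiplicity_le_def
proof
  fix y
  have "{e\<in>E \<times> K. y \<in> S (fst e)} = {e\<in>E. y \<in> S e} \<times> K"
    by auto
  then show "finite {e\<in>E \<times> K. y \<in> S (fst e)} \<and> card {e\<in>E \<times> K. y \<in> S (fst e)} \<le> N * card K"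
    using assms unfolding point_multiplicity_le_def by (simp add: card_cartesian_product)
qed

lemma boundedly_point_finite_iff_point_multiplicity_le:
  "boundedly_point_finite \<A> \<longleftrightarrow> (\<exists>N. point_multiplicity_le \<A> (\<lambda>V. V) N)"
proof
  assume "boundedly_point_finite \<A>"
  then obtain n where n: "\<And>\<F>. \<F> \<subseteq> \<A> \<Longrightarrow> finite \<F> \<Longrightarrow> card \<F> = n + 2 \<Longrightarrow> \<Inter>\<F> = {}"
    unfolding boundedly_point_finite_def by blast
  have "finite {V\<in>\<A>. y \<in> V} \<and> card {V\<in>\<A>. y \<in> V} \<le> n + 1" for y
  proof -
    have no_large: "\<not> (n + 2 \<le> card T)" if "T \<subseteq> {V\<in>\<A>. y \<in> V}" "finite T" for T
    proof
      assume "n + 2 \<le> card T"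
      then obtain T' where "T' \<subseteq> T" "card T' = n + 2" "finite T'"
        by (rule obtain_subset_with_card_n)
      with that n[of T'] show False
        by blast
    qed
    have "finite {V\<in>\<A>. y \<in> V}"
    proof (rule ccontr)
      assume "infinite {V\<in>\<A>. y \<in> V}"
      then obtain T where "finite T" "card T = n + 2" "T \<subseteq> {V\<in>\<A>. y \<in> V}"
        using infinite_arbitrarily_large by blast
      with no_large[of T] show False
        by simp
    qed
    with no_large[of "{V\<in>\<A>. y \<in> V}"] show ?thesis
      by simp
  qed
  then show "\<exists>N. point_multiplicity_le \<A> (\<lambda>V. V) N"
    unfolding point_multiplicity_le_def by blast
next
  assume "\<exists>N. point_multiplicity_le \<A> (\<lambda>V. V) N"
  then obtain N where N: "\<And>y. finite {V\<in>\<A>. y \<in> V} \<and> card {V\<in>\<A>. y \<in> V} \<le> N"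
    unfolding point_multiplicity_le_def by blast
  show "boundedly_point_finite \<A>"
    unfolding boundedly_point_finite_def
  proof (intro exI[of _ N] allI impI)
    fix \<F> assume \<F>: "\<F> \<subseteq> \<A> \<and> finite \<F> \<and> card \<F> = N + 2"
    show "\<Inter>\<F> = {}"
    proof (rule ccontr)
      assume "\<Inter>\<F> \<noteq> {}"
      then obtain y where "\<F> \<subseteq> {V\<in>\<A>. y \<in> V}"
        using \<F> by blast
      then have "card \<F> \<le> N"
        using N[of y] by (meson card_mono le_trans)
      with \<F> show False
        by linarith
    qed
  qed
qed

lemma boundedly_point_finite_image_Pow:
  assumes "point_multiplicity_le E S N" "\<B> \<subseteq> f ` Pow E" "\<And>p. p \<subseteq> E \<Longrightarrow> f p \<subseteq> (\<Inter>e\<in>p. S e)"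
  shows "boundedly_point_finite \<B>"
  unfolding boundedly_point_finite_iff_point_multiplicity_le point_multiplicity_le_def
proof (intro exI allI)
  fix y
  let ?M = "{e\<in>E. y \<in> S e}"
  have sub: "{B\<in>\<B>. y \<in> B} \<subseteq> f ` Pow ?M"
  proof
    fix B assume B: "B \<in> {B\<in>\<B>. y \<in> B}"
    then obtain p where p: "p \<subseteq> E" "B = f p"
      using assms(2) by blast
    then have "p \<subseteq> ?M"
      using B assms(3)[of p] by blast
    with p(2) show "B \<in> f ` Pow ?M"
      by blast
  qed
  have fin: "finite ?M" and "card ?M \<le> N"
    using assms(1) unfolding point_multiplicity_le_def by auto
  have "card {B\<in>\<B>. y \<in> B} \<le> card (f ` Pow ?M)"
    using sub fin by (intro card_mono) auto
  also have "\<dots> \<le> card (Pow ?M)"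
    using fin by (intro card_image_le) auto
  also have "\<dots> \<le> 2 ^ N"
    using fin \<open>card ?M \<le> N\<close> by (simp add: card_Pow)
  finally show "finite {B\<in>\<B>. y \<in> B} \<and> card {B\<in>\<B>. y \<in> B} \<le> 2 ^ N"
    using sub fin by (meson finite_Pow_iff finite_imageI finite_subset)
qed

lemma finite_subset_incseq_UN:
  assumes "incseq E" "finite A" "A \<subseteq> (\<Union>n. E n)"
  obtains n where "A \<subseteq> E n"
proof -
  have "\<exists>n. A \<subseteq> E n"
    using assms(2,3)
  proof (induction rule: finite_induct)
    case empty
    then show ?case by blast
  next
    case (insert x A)
    then obtain m n where "x \<in> E m" "A \<subseteq> E n"
      by blast
    moreover have "E m \<subseteq> E (max m n)" "E n \<subseteq> E (max m n)"
      using assms(1) by (simp_all add: incseqD)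
    ultimately show ?case
      by blast
  qed
  then show thesis
    using that by blast
qed

text \<open>Split along the members e of one \<open>t\<^sub>0 \<in> J\<close>: on \<open>A \<inter> Z e\<close> only the sets \<open>t \<in> J\<close> with
  \<open>e \<notin> t\<close> remain to be met, and these involve one index fewer at each point, so the possibly
  infinite intersection becomes a finite union of zero sets by induction on the bound.\<close>
lemma zero_set_Int_INT_UN_bounded_multiplicity:
  assumes "zero_set X A" "\<And>t. t \<in> J \<Longrightarrow> finite t" "\<And>e. e \<in> \<Union>J \<Longrightarrow> zero_set X (Z e)"
    "\<And>y. y \<in> A \<Longrightarrow> finite {e\<in>\<Union>J. y \<in> Z e} \<and> card {e\<in>\<Union>J. y \<in> Z e} \<le> s"
  shows "zero_set X (A \<inter> (\<Inter>t\<in>J. \<Union>e\<in>t. Z e))"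
  using assms
proof (induction s arbitrary: A J)
  case 0
  show ?case
  proof (cases "J = {}")
    case True
    then show ?thesis using 0 by simp
  next
    case False
    have "y \<notin> A" if "y \<in> (\<Inter>t\<in>J. \<Union>e\<in>t. Z e)" for y
    proof
      assume "y \<in> A"
      then have "{e\<in>\<Union>J. y \<in> Z e} = {}"
        using "0.prems"(4)[of y] card_0_eq by blast
      with that False show False
        by blast
    qed
    then have "A \<inter> (\<Inter>t\<in>J. \<Union>e\<in>t. Z e) = {}"
      by blast
    then show ?thesis
      by (simp add: zero_set_empty)
  qed
next
  case (Suc s)
  show ?case
  proof (cases "J = {}")
    case True
    then show ?thesis using Suc by simp
  next
    case False
    then obtain t0 where t0: "t0 \<in> J"
      by blast
    define J' where "J' e = {t\<in>J. e \<notin> t}" for e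
    have split: "A \<inter> (\<Inter>t\<in>J. \<Union>e\<in>t. Z e) = (\<Union>e\<in>t0. (A \<inter> Z e) \<inter> (\<Inter>t\<in>J' e. \<Union>e'\<in>t. Z e'))"
      using t0 unfolding J'_def by blast
    have "zero_set X ((A \<inter> Z e) \<inter> (\<Inter>t\<in>J' e. \<Union>e'\<in>t. Z e'))" if e: "e \<in> t0" for e
    proof (rule Suc.IH)
      show "zero_set X (A \<inter> Z e)"
        using Suc.prems t0 e by (blast intro: zero_set_Int)
      show "finite t" if "t \<in> J' e" for t
        using that Suc.prems(2) by (simp add: J'_def)
      show "zero_set X (Z e')" if "e' \<in> \<Union>(J' e)" for e'
        using that Suc.prems(3) by (auto simp: J'_def)
      show "finite {e'\<in>\<Union>(J' e). y \<in> Z e'} \<and> card {e'\<in>\<Union>(J' e). y \<in> Z e'} \<le> s"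
        if "y \<in> A \<inter> Z e" for y
      proof -
        let ?M = "{e'\<in>\<Union>J. y \<in> Z e'}"
        have "finite ?M" "card ?M \<le> Suc s" "e \<in> ?M"
          using Suc.prems(4) that t0 e by auto
        then have "finite (?M - {e})" "card (?M - {e}) \<le> s"
          by (auto simp: card_Diff_singleton)
        moreover have "{e'\<in>\<Union>(J' e). y \<in> Z e'} \<subseteq> ?M - {e}"
          by (auto simp: J'_def)
        ultimately show ?thesis
          by (meson card_mono finite_subset le_trans)
      qed
    qed
    moreover have "finite t0"
      using Suc.prems(2) t0 .
    ultimately show ?thesis
      unfolding split by (intro zero_set_UN_finite)
  qed
qed

lemma cozero_set_Diff_INT_UN_bounded_multiplicity:
  assumes "cozero_set X C" "\<And>t. t \<in> J \<Longrightarrow> finite t" "\<And>e. e \<in> \<Union>J \<Longrightarrow> zero_set X (Z e)"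
    "point_multiplicity_le (\<Union>J) Z s"
  shows "cozero_set X (C - (\<Inter>t\<in>J. \<Union>e\<in>t. Z e))"
proof -
  have "zero_set X (topspace X \<inter> (\<Inter>t\<in>J. \<Union>e\<in>t. Z e))"
    using assms(2-4) zero_set_topspace
    by (intro zero_set_Int_INT_UN_bounded_multiplicity) (auto simp: point_multiplicity_le_def)
  then have "cozero_set X (topspace X - topspace X \<inter> (\<Inter>t\<in>J. \<Union>e\<in>t. Z e))"
    unfolding cozero_set_iff_complement_zero_set by blast
  moreover have "C - (\<Inter>t\<in>J. \<Union>e\<in>t. Z e) = C \<inter> (topspace X - topspace X \<inter> (\<Inter>t\<in>J. \<Union>e\<in>t. Z e))"
    using assms(1) unfolding cozero_set_iff_complement_zero_set by blast
  ultimately show ?thesis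
    using assms(1) by (simp add: cozero_set_Int)
qed

lemma sigma_boundedly_point_finite_cozero_cover:
  fixes E :: "nat \<Rightarrow> 'i set" and C Z S :: "'i \<Rightarrow> 'a set"
  assumes E: "incseq E"
    and C: "\<And>e. e \<in> (\<Union>L. E L) \<Longrightarrow> cozero_set Y (C e) \<and> C e \<subseteq> S e"
    and Z: "\<And>e. e \<in> (\<Union>L. E L) \<Longrightarrow> zero_set Y (Z e) \<and> Z e \<subseteq> S e"
    and mult: "\<And>L. point_multiplicity_le (E L) S (N L)"
    and cover: "\<And>x. x \<in> W \<Longrightarrow> \<exists>p t. finite p \<and> finite t \<and> p \<union> t \<subseteq> (\<Union>L. E L) \<and>
      x \<in> topspace Y \<inter> (\<Inter>e\<in>p. C e) - (\<Union>e\<in>t. Z e) \<and>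
      topspace Y \<inter> (\<Inter>e\<in>p. C e) - (\<Union>e\<in>t. Z e) \<subseteq> W"
  shows "\<exists>\<B>. sigma_boundedly_point_finite \<B> \<and> (\<forall>B\<in>\<B>. cozero_set Y B) \<and> \<Union>\<B> = W"
proof -
  define P where "P p = topspace Y \<inter> (\<Inter>e\<in>p. C e)" for p
  define J where "J L p = {t. finite t \<and> t \<subseteq> E L \<and> P p - (\<Union>e\<in>t. Z e) \<subseteq> W}" for L p
  define Q where "Q L p = P p - (\<Inter>t\<in>J L p. \<Union>e\<in>t. Z e)" for L p
  define F where "F L = Q L ` {p. finite p \<and> p \<subseteq> E L}" for L
  have Q_subset: "Q L p \<subseteq> W" for L p
    unfolding Q_def J_def by blast
  have Q_cozero: "cozero_set Y (Q L p)" if p: "finite p" "p \<subseteq> E L" for L p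
    unfolding Q_def
  proof (rule cozero_set_Diff_INT_UN_bounded_multiplicity)
    show "cozero_set Y (P p)"
      unfolding P_def using p C by (intro cozero_set_INT_finite) auto
    show "finite t" if "t \<in> J L p" for t
      using that by (simp add: J_def)
    show "zero_set Y (Z e)" if "e \<in> \<Union>(J L p)" for e
      using that Z by (auto simp: J_def)
    show "point_multiplicity_le (\<Union>(J L p)) Z (N L)"
      using mult by (rule point_multiplicity_le_mono) (use Z in \<open>auto simp: J_def\<close>)
  qed
  have F_bpf: "boundedly_point_finite (F L)" for L
  proof (rule boundedly_point_finite_image_Pow)
    show "point_multiplicity_le (E L) C (N L)"
      using mult by (rule point_multiplicity_le_mono) (use C in auto)
    show "F L \<subseteq> Q L ` Pow (E L)"
      unfolding F_def by blast
    show "Q L p \<subseteq> (\<Inter>e\<in>p. C e)" for p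
      unfolding Q_def P_def by blast
  qed
  have W_covered: "x \<in> \<Union>(\<Union>L. F L)" if x: "x \<in> W" for x
  proof -
    obtain p t where pt: "finite p" "finite t" "p \<union> t \<subseteq> (\<Union>L. E L)"
      "x \<in> P p - (\<Union>e\<in>t. Z e)" "P p - (\<Union>e\<in>t. Z e) \<subseteq> W"
      using cover[OF x] unfolding P_def by blast
    obtain L where L: "p \<union> t \<subseteq> E L"
      using finite_subset_incseq_UN[OF E _ pt(3)] pt(1,2) by blast
    then have "t \<in> J L p"
      using pt unfolding J_def by blast
    then have "x \<in> Q L p"
      using pt(4) unfolding Q_def by blast
    moreover have "Q L p \<in> F L"
      using pt(1) L unfolding F_def by blast
    ultimately show ?thesis
      by blast
  qed
  show ?thesis
  proof (intro exI conjI)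
    show "sigma_boundedly_point_finite (\<Union>L. F L)"
      unfolding sigma_boundedly_point_finite_def using F_bpf by blast
    show "\<forall>B\<in>(\<Union>L. F L). cozero_set Y B"
      unfolding F_def using Q_cozero by blast
    show "\<Union>(\<Union>L. F L) = W"
      using Q_subset W_covered unfolding F_def by blast
  qed
qed

lemma U_representation_subset:
  "U_representation X V U \<Longrightarrow> U n \<subseteq> V"
  unfolding U_representation_def by blast

lemma U_representation_cozero_member:
  assumes "U_representation X V U" "x \<in> V"
  shows "\<exists>m. x \<in> U (2 * m + 1)"
proof -
  obtain i where "x \<in> U i"
    using assms unfolding U_representation_def by blast
  moreover have "U i \<subseteq> U (2 * i + 1)"
    using assms(1) lift_Suc_mono_le[of U i "2 * i + 1"] unfolding U_representation_def by simp
  ultimately show ?thesis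
    by blast
qed

lemma almost_subbase_neighbourhood:
  assumes rep: "\<And>V. V \<in> \<A> \<Longrightarrow> U_representation Y V (U V)"
    and sb: "subbase Y (\<A> \<union> {topspace Y - U V (2*n) | V n. V \<in> \<A>})"
    and W: "openin Y W" "x \<in> W"
  shows "\<exists>p t. finite p \<and> finite t \<and> p \<union> t \<subseteq> \<A> \<times> UNIV \<and>
    x \<in> topspace Y \<inter> (\<Inter>e\<in>p. U (fst e) (2 * snd e + 1)) - (\<Union>e\<in>t. U (fst e) (2 * snd e)) \<and>
    topspace Y \<inter> (\<Inter>e\<in>p. U (fst e) (2 * snd e + 1)) - (\<Union>e\<in>t. U (fst e) (2 * snd e)) \<subseteq> W"
proof -
  obtain G where G: "finite G" "G \<subseteq> \<A> \<union> {topspace Y - U V (2*n) | V n. V \<in> \<A>}"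
    "x \<in> topspace Y \<inter> \<Inter>G" "topspace Y \<inter> \<Inter>G \<subseteq> W"
    using sb W unfolding subbase_def by meson
  have "\<forall>V\<in>G \<inter> \<A>. \<exists>m. x \<in> U V (2 * m + 1)"
  proof
    fix V assume "V \<in> G \<inter> \<A>"
    with G(3) rep show "\<exists>m. x \<in> U V (2 * m + 1)"
      by (blast intro: U_representation_cozero_member)
  qed
  then obtain m where m: "\<And>V. V \<in> G \<inter> \<A> \<Longrightarrow> x \<in> U V (2 * m V + 1)"
    by metis
  have "\<forall>s\<in>G - \<A>. \<exists>e\<in>\<A> \<times> UNIV. s = topspace Y - U (fst e) (2 * snd e)"
    using G(2) by fastforce
  then obtain c where c: "\<And>s. s \<in> G - \<A> \<Longrightarrow> c s \<in> \<A> \<times> UNIV"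
    "\<And>s. s \<in> G - \<A> \<Longrightarrow> s = topspace Y - U (fst (c s)) (2 * snd (c s))"
    by metis
  define p where "p = (\<lambda>V. (V, m V)) ` (G \<inter> \<A>)"
  define t where "t = c ` (G - \<A>)"
  let ?N = "topspace Y \<inter> (\<Inter>e\<in>p. U (fst e) (2 * snd e + 1)) - (\<Union>e\<in>t. U (fst e) (2 * snd e))"
  have "z \<in> topspace Y \<inter> \<Inter>G" if z: "z \<in> ?N" for z
  proof -
    have "z \<in> s" if s: "s \<in> G" for s
    proof (cases "s \<in> \<A>")
      case True
      then have "z \<in> U s (2 * m s + 1)"
        using s z unfolding p_def by auto
      then show ?thesis
        using U_representation_subset rep True by blast
    next
      case False
      then show ?thesis
        using s z c(2)[of s] unfolding t_def by auto
    qed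
    then show ?thesis
      using z by blast
  qed
  then have "?N \<subseteq> W"
    using G(4) by (meson subsetD subsetI)
  moreover have "x \<in> ?N"
  proof -
    have "x \<notin> U (fst e) (2 * snd e)" if e: "e \<in> t" for e
    proof -
      obtain s where "s \<in> G - \<A>" "e = c s"
        using e unfolding t_def by blast
      then show ?thesis
        using G(3) c(2)[of s] by blast
    qed
    then show ?thesis
      using G(3) m unfolding p_def by auto
  qed
  moreover have "p \<union> t \<subseteq> \<A> \<times> UNIV"
    using c(1) unfolding p_def t_def by blast
  moreover have "finite p" "finite t"
    using G(1) unfolding p_def t_def by auto
  ultimately show ?thesis
    by blast
qed

lemma sigma_boundedly_point_finite_levels:
  assumes "sigma_boundedly_point_finite \<A>"
  obtains E :: "nat \<Rightarrow> ('a set \<times> nat) set" and N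
  where "incseq E" "(\<Union>L. E L) = \<A> \<times> UNIV" "\<And>L. point_multiplicity_le (E L) fst (N L)"
proof -
  obtain \<A>k :: "nat \<Rightarrow> 'a set set" where \<A>k: "\<A> = (\<Union>k. \<A>k k)" "\<forall>k. boundedly_point_finite (\<A>k k)"
    using assms unfolding sigma_boundedly_point_finite_def by blast
  obtain N where N: "\<And>k. point_multiplicity_le (\<A>k k) (\<lambda>V. V) (N k)"
    using \<A>k(2) unfolding boundedly_point_finite_iff_point_multiplicity_le by metis
  define E where "E L = (\<Union>k\<le>L. \<A>k k) \<times> {..L}" for L
  have "incseq E"
    unfolding incseq_def E_def by (intro allI impI Sigma_mono) (auto intro: le_trans)
  moreover have "(\<Union>L. E L) = \<A> \<times> UNIV"
  proof
    show "(\<Union>L. E L) \<subseteq> \<A> \<times> UNIV"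
      unfolding E_def \<A>k(1) by blast
    show "\<A> \<times> UNIV \<subseteq> (\<Union>L. E L)"
    proof
      fix e :: "'a set \<times> nat" assume "e \<in> \<A> \<times> UNIV"
      then obtain k where "fst e \<in> \<A>k k"
        unfolding \<A>k(1) by auto
      then have "e \<in> E (max k (snd e))"
        unfolding E_def by (auto simp: mem_Times_iff)
      then show "e \<in> (\<Union>L. E L)"
        by blast
    qed
  qed
  moreover have "point_multiplicity_le (E L) fst ((\<Sum>k\<le>L. N k) * card {..L})" for L
    unfolding E_def using N by (intro point_multiplicity_le_Times point_multiplicity_le_UN) auto
  ultimately show thesis
    by (rule that)
qed

theorem proposition5p10:
  fixes Y :: "'a topology" and W :: "'a set"
  assumes "UE_space Y" and "openin Y W"
  shows "\<exists>\<B>. sigma_boundedly_point_finite \<B> \<and> (\<forall>B\<in>\<B>. cozero_set Y B) \<and> \<Union>\<B> = W"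
proof -
  obtain \<A> where \<A>: "almost_subbase Y \<A>" "sigma_boundedly_point_finite \<A>"
    using assms(1) unfolding UE_space_def by blast
  obtain U where rep: "\<forall>V\<in>\<A>. U_representation Y V (U V)"
    and sb: "subbase Y (\<A> \<union> {topspace Y - U V (2*n) | V n. V \<in> \<A>})"
    using \<A>(1) unfolding almost_subbase_def by blast
  obtain E :: "nat \<Rightarrow> ('a set \<times> nat) set" and N
    where E: "incseq E" "(\<Union>L. E L) = \<A> \<times> UNIV" "\<And>L. point_multiplicity_le (E L) fst (N L)"
    using sigma_boundedly_point_finite_levels[OF \<A>(2)] by blast
  show ?thesis
  proof (rule sigma_boundedly_point_finite_cozero_cover[OF E(1) _ _ E(3)])
    fix e :: "'a set \<times> nat" assume "e \<in> (\<Union>L. E L)"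
    then have rep_e: "U_representation Y (fst e) (U (fst e))"
      using rep unfolding E(2) by auto
    then show "cozero_set Y (U (fst e) (2 * snd e + 1)) \<and> U (fst e) (2 * snd e + 1) \<subseteq> fst e"
      and "zero_set Y (U (fst e) (2 * snd e)) \<and> U (fst e) (2 * snd e) \<subseteq> fst e"
      using U_representation_subset[OF rep_e] unfolding U_representation_def by auto
  next
    fix x assume x: "x \<in> W"
    show "\<exists>p t. finite p \<and> finite t \<and> p \<union> t \<subseteq> (\<Union>L. E L) \<and>
      x \<in> topspace Y \<inter> (\<Inter>e\<in>p. U (fst e) (2 * snd e + 1)) - (\<Union>e\<in>t. U (fst e) (2 * snd e)) \<and>
      topspace Y \<inter> (\<Inter>e\<in>p. U (fst e) (2 * snd e + 1)) - (\<Union>e\<in>t. U (fst e) (2 * snd e)) \<subseteq> W"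
      unfolding E(2) using almost_subbase_neighbourhood[OF bspec[OF rep] sb assms(2) x] .
  qed
qed

end
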